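(* Define $f_i:\mathbb{R}^3\times\mathbb{R}^2\to\mathbb{R}$ by $f_1(p,x)=-x_2-\tfrac12x_1^2-p_1+p_2x_2$, $f_2(p,x)=x_2-\tfrac12x_1^2-p_2+p_1x_1$, $f_3(p,x)=x_1+|x_2|^{3/2}-p_3$, and let $P:=\{p\in\mathbb{R}^3: -p_1-p_2+\tfrac32p_1^2\le0\}$. Then the parametric system $f_i(p,x)\le0$, $i=1,2,3$, $p\in P$, enjoys Robinson stability at $(\bar p,\bar x)=(0,0)\in\mathbb{R}^3\times\mathbb{R}^2$, i.e. there exist $\kappa\ge0$ and neighborhoods $V$ of $0$ in $P$ and $U$ of $0$ in $\mathbb{R}^2$ such that $\operatorname{dist}(x;\Gamma(p))\le\kappa\operatorname{dist}((f_1,f_2,f_3)(p,x);\mathbb{R}^3_-)$ for all $(p,x)\in V\times U$, where $\Gamma(p)=\{x:f_i(p,x)\le0,\ i=1,2,3\}$; whereas the Mangasarian–Fromovitz constraint qualification fails for the system $f_i(0,x)\le0$, $i=1,2,3$, at $x=0$.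
   Context: The Mangasarian–Fromovitz constraint qualification for the inequality system $\phi_i(x)\le0$ at a feasible $\bar x$ (all $\phi_i$ differentiable) means there exists $d$ with $\langle\nabla\phi_i(\bar x),d\rangle<0$ for all active indices $i$ (those with $\phi_i(\bar x)=0$). *)

theory Defs
  imports "HOL-Analysis.Analysis"
begin

definition cf :: "nat \<Rightarrow> real^3 \<Rightarrow> real^2 \<Rightarrow> real" where
  "cf i p x =
     (if i = 1 then - x$2 - (1/2) * (x$1)^2 - p$1 + p$2 * x$2
      else if i = 2 then x$2 - (1/2) * (x$1)^2 - p$2 + p$1 * x$1
      else x$1 + \<bar>x$2\<bar> powr (3/2) - p$3)"

definition cF :: "real^3 \<Rightarrow> real^2 \<Rightarrow> real^3" where
  "cF p x = (\<chi> i. if i = 1 then cf 1 p x else if i = 2 then cf 2 p x else cf 3 p x)"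

definition Pset :: "(real^3) set" where
  "Pset = {p. - p$1 - p$2 + (3/2) * (p$1)^2 \<le> 0}"

definition Gamma :: "real^3 \<Rightarrow> (real^2) set" where
  "Gamma p = {x. \<forall>i\<in>{1,2,3}. cf i p x \<le> 0}"

definition negorth :: "(real^3) set" where
  "negorth = {y. \<forall>i. y$i \<le> 0}"

definition MFCQ :: "nat set \<Rightarrow> (nat \<Rightarrow> 'a::real_inner \<Rightarrow> real) \<Rightarrow> 'a \<Rightarrow> bool" where
  "MFCQ I \<phi> xbar \<longleftrightarrow>
     (\<exists>d. \<forall>i\<in>I. \<phi> i xbar = 0 \<longrightarrow> (\<exists>g. GDERIV (\<phi> i) xbar :> g \<and> inner g d < 0))"

end

theory Submission imports Defs begin

text \<open>Let r be the largest constraint violation at (p, x). Lowering x1 by 3r and then clamping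
  x2 into the interval of heights allowed by f1 and f2 at the new abscissa gives a feasible
  point at distance at most 5r: the interval is nonempty because p is in P (a discriminant
  computation), clamping moves x2 by at most 2r, and since t \<mapsto> |t| powr (3/2) is
  1-Lipschitz near 0 this move costs f3 at most 2r, which the drop of 3r in x1 absorbs.
  MFCQ fails because f1(0, -) and f2(0, -) are both active at 0 with opposite gradients.\<close>

lemma powr_three_halves:
  fixes t :: real
  assumes "t \<ge> 0"
  shows "t powr (3/2) = t * sqrt t"
proof (cases "t = 0")
  case False
  have "t powr (3/2) = t powr (1 + 1/2)" by simp
  also have "\<dots> = t powr 1 * t powr (1/2)" by (rule powr_add)
  also have "\<dots> = t * sqrt t" using assms False by (simp add: powr_half_sqrt)
  finally show ?thesis .
qed simp

lemma abs_powr_three_halves_diff_le: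
  fixes u v :: real
  assumes "\<bar>u\<bar> \<le> 1/9"
  shows "\<bar>u\<bar> powr (3/2) - \<bar>v\<bar> powr (3/2) \<le> \<bar>u - v\<bar>"
proof -
  define A B where "A = sqrt \<bar>u\<bar>" and "B = sqrt \<bar>v\<bar>"
  have A0: "A \<ge> 0" and B0: "B \<ge> 0" unfolding A_def B_def by simp_all
  have Au: "A^2 = \<bar>u\<bar>" and Bv: "B^2 = \<bar>v\<bar>" unfolding A_def B_def by simp_all
  have A13: "A \<le> 1/3"
  proof (rule power2_le_imp_le)
    show "A^2 \<le> (1/3)^2" using assms unfolding Au by (simp add: power2_eq_square)
  qed simp
  have "\<bar>u\<bar> powr (3/2) - \<bar>v\<bar> powr (3/2) = A^3 - B^3"
    unfolding A_def B_def by (simp add: powr_three_halves power3_eq_cube)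
  also have "\<dots> \<le> 3 * A * \<bar>A^2 - B^2\<bar>"
  proof (cases "B \<le> A")
    case True
    have BA: "B * B \<le> A * A" using True B0 by (intro mult_mono) auto
    moreover have "0 \<le> A * B" "0 \<le> A * A" using A0 B0 by simp_all
    ultimately have "0 \<le> 2*(A*A) + 2*(A*B) - B*B" by linarith
    then have "0 \<le> (A - B) * (2*(A*A) + 2*(A*B) - B*B)" using True by simp
    also have "\<dots> = 3*A*(A*A - B*B) - (A^3 - B^3)" by (simp add: algebra_simps power3_eq_cube)
    finally show ?thesis using BA by (simp add: power2_eq_square)
  next
    case False
    then have "A^3 \<le> B^3" using A0 by (intro power_mono) auto
    moreover have "0 \<le> 3 * A * \<bar>A^2 - B^2\<bar>" using A0 by simp
    ultimately show ?thesis by linarith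
  qed
  also have "\<dots> \<le> 1 * \<bar>A^2 - B^2\<bar>" using A13 by (intro mult_right_mono) auto
  also have "\<dots> \<le> \<bar>u - v\<bar>" using Au Bv abs_triangle_ineq3[of u v] by simp
  finally show ?thesis .
qed

lemma has_real_derivative_abs_powr_three_halves_at_0:
  "((\<lambda>t::real. \<bar>t\<bar> powr (3/2)) has_real_derivative 0) (at 0)"
  unfolding DERIV_def
proof (rule Lim_null_comparison)
  show "\<forall>\<^sub>F h in at 0. norm ((\<bar>0 + h\<bar> powr (3/2) - \<bar>0::real\<bar> powr (3/2)) / h) \<le> sqrt \<bar>h\<bar>"
    by (intro always_eventually allI) (simp add: powr_three_halves abs_mult)
  show "((\<lambda>h::real. sqrt \<bar>h\<bar>) \<longlongrightarrow> 0) (at 0)"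
    using tendsto_real_sqrt[OF tendsto_rabs[OF tendsto_ident_at[of "0::real" UNIV]]] by simp
qed

text \<open>Multiplied by 1 - b, this says that a quadratic in z with leading coefficient (2 - b)/2
  is nonnegative; its constant term a + (1 - b) b is at least (44/100) a^2 by the
  inequality defining P, which makes the discriminant nonpositive.\<close>
lemma quadratic_band_nonempty:
  fixes a b z :: real
  assumes a: "\<bar>a\<bar> \<le> 1/100" and b: "\<bar>b\<bar> \<le> 1/100" and P: "- a - b + 3/2*a^2 \<le> 0"
  shows "-(z^2/2 + a)/(1 - b) \<le> z^2/2 + b - a*z"
proof -
  define q where "q = 1 - b"
  have q: "q \<ge> 99/100" "q \<le> 101/100" using b unfolding q_def by auto
  define A c s where "A = (1 + q)/2" and "c = a + q*b" and "s = a + b"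
  have s0: "s \<ge> 3/2*a^2" using P unfolding s_def by simp
  have a2: "a^2 \<ge> 0" by simp
  have "c = s*(1 - s + 2*a) - a^2"
    unfolding c_def s_def q_def by (simp add: algebra_simps power2_eq_square)
  moreover have "s \<ge> 0" using s0 a2 by linarith
  moreover have "s*(1 - s + 2*a) \<ge> s * (96/100)"
    using s0 a b \<open>s \<ge> 0\<close> by (intro mult_left_mono) (auto simp: s_def)
  ultimately have c1: "c \<ge> 44/100 * a^2" using s0 by linarith
  have c0: "c \<ge> 0" using c1 a2 by linarith
  have "q^2 \<le> 10201/10000" using mult_mono[OF q(2) q(2)] q by (simp add: power2_eq_square)
  then have "q^2 * a^2 \<le> 10201/10000 * a^2" by (intro mult_right_mono) auto
  then have "(q*a)^2 \<le> 10201/10000 * a^2" by (simp add: power_mult_distrib)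
  moreover have "4*A*c \<ge> (398/100) * c" using q c0 unfolding A_def by (intro mult_right_mono) auto
  ultimately have disc: "4*A*c - (q*a)^2 \<ge> 0" using c1 a2 by linarith
  have "4*A*(A*z^2 - q*a*z + c) = (2*A*z - q*a)^2 + (4*A*c - (q*a)^2)"
    by (simp add: algebra_simps power2_eq_square)
  also have "\<dots> \<ge> 0" using disc by simp
  finally have "A*z^2 - q*a*z + c \<ge> 0" using q unfolding A_def by (simp add: zero_le_mult_iff)
  then have "-(z^2/2 + a) \<le> q*(z^2/2 + b - a*z)"
    unfolding A_def c_def by (simp add: algebra_simps add_divide_distrib)
  then show ?thesis using q unfolding q_def by (simp add: divide_le_eq mult.commute)
qed

lemma clamp_second_coordinate:
  fixes a b u v r :: real
  assumes a: "\<bar>a\<bar> \<le> 1/100" and b: "\<bar>b\<bar> \<le> 1/100" and u: "\<bar>u\<bar> \<le> 1/100"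
    and P: "- a - b + 3/2*a^2 \<le> 0" and r: "0 \<le> r"
    and f1: "- v - 1/2*u^2 - a + b* v \<le> r" and f2: "v - 1/2*u^2 - b + a*u \<le> r"
  obtains w where "- w - 1/2*(u - 3*r)^2 - a + b*w \<le> 0"
    and "w - 1/2*(u - 3*r)^2 - b + a*(u - 3*r) \<le> 0" and "\<bar>v - w\<bar> \<le> 2*r"
proof -
  define y where "y = u - 3*r"
  \<comment> \<open>the first two constraints at abscissa y say exactly that w lies in [L, U]\<close>
  define L U where "L = -(y^2/2 + a)/(1 - b)" and "U = y^2/2 + b - a*y"
  have LU: "L \<le> U" unfolding L_def U_def by (rule quadratic_band_nonempty[OF a b P])
  have q: "99/100 \<le> 1 - b" using b by auto
  have qL: "(1 - b)*L = -(y^2/2 + a)" unfolding L_def using q by simp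
  have shift: "u^2 - y^2 \<le> 6/100 * r"
  proof -
    have "u^2 - y^2 = 3*r*(2*u - 3*r)" unfolding y_def by (simp add: algebra_simps power2_eq_square)
    also have "\<dots> \<le> 3*r*(2/100)" using r u by (intro mult_left_mono) auto
    finally show ?thesis by simp
  qed
  have "L - v \<le> 2*r"
  proof (rule ccontr)
    assume "\<not> L - v \<le> 2*r"
    then have "(1 - b)*(2*r) < (1 - b)*(L - v)" using q by (intro mult_strict_left_mono) auto
    moreover have "99/100*(2*r) \<le> (1 - b)*(2*r)" using q r by (intro mult_right_mono) auto
    moreover have "(1 - b)*(L - v) \<le> 103/100*r" using qL f1 shift by (simp add: algebra_simps)
    ultimately show False using r by linarith
  qed
  moreover have "v - U \<le> 2*r"
  proof -
    have "(- a)*(3*r) \<le> 1/100*(3*r)" using a r by (intro mult_right_mono) auto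
    moreover have "v - U = (v - 1/2*u^2 - b + a*u) + (u^2 - y^2)/2 + (- a)*(3*r)"
      unfolding U_def y_def by (simp add: field_simps)
    ultimately show ?thesis using f2 shift r by (simp add: field_simps)
  qed
  moreover define w where "w = max L (min v U)"
  ultimately have "\<bar>v - w\<bar> \<le> 2*r" using LU r by auto
  moreover have "- w - 1/2*y^2 - a + b*w \<le> 0"
  proof -
    have "(1 - b)*L \<le> (1 - b)*w" unfolding w_def using q by (intro mult_left_mono) auto
    then show ?thesis using qL by (simp add: algebra_simps)
  qed
  moreover have "w - 1/2*y^2 - b + a*y \<le> 0" using LU unfolding w_def U_def by auto
  ultimately show thesis using that unfolding y_def by blast
qed

lemma feasible_point_within_residual:
  fixes a b c u v r :: real
  assumes a: "\<bar>a\<bar> \<le> 1/100" and b: "\<bar>b\<bar> \<le> 1/100" and c: "\<bar>c\<bar> \<le> 1/100"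
    and u: "\<bar>u\<bar> \<le> 1/100" and v: "\<bar>v\<bar> \<le> 1/100" and P: "- a - b + 3/2*a^2 \<le> 0"
    and r: "r = max 0 (max (- v - 1/2*u^2 - a + b* v)
                 (max (v - 1/2*u^2 - b + a*u) (u + \<bar>v\<bar> powr (3/2) - c)))"
  obtains y1 y2 where "- y2 - 1/2*y1^2 - a + b*y2 \<le> 0" and "y2 - 1/2*y1^2 - b + a*y1 \<le> 0"
    and "y1 + \<bar>y2\<bar> powr (3/2) - c \<le> 0" and "\<bar>u - y1\<bar> \<le> 3*r" and "\<bar>v - y2\<bar> \<le> 2*r"
proof -
  have r0: "0 \<le> r" and f1: "- v - 1/2*u^2 - a + b* v \<le> r"
    and f2: "v - 1/2*u^2 - b + a*u \<le> r" and f3: "u + \<bar>v\<bar> powr (3/2) - c \<le> r"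
    using r by (simp_all add: le_max_iff_disj)
  have bv: "\<bar>b* v\<bar> \<le> \<bar>v\<bar>" and au: "\<bar>a*u\<bar> \<le> \<bar>u\<bar>"
    using a b by (simp_all add: abs_mult mult_left_le_one_le)
  have vv: "\<bar>v\<bar> powr (3/2) \<le> \<bar>v\<bar>"
    using v by (simp add: powr_three_halves mult_right_le_one_le)
  have u2: "0 \<le> u^2" by simp
  have e1: "- v - 1/2*u^2 - a + b* v \<le> 1/25" using a v u2 bv unfolding abs_le_iff by linarith
  have e2: "v - 1/2*u^2 - b + a*u \<le> 1/25" using b u v u2 au unfolding abs_le_iff by linarith
  have e3: "u + \<bar>v\<bar> powr (3/2) - c \<le> 1/25" using c u v vv unfolding abs_le_iff by linarith
  have "r \<le> 1/25" unfolding r by (intro max.boundedI e1 e2 e3) simp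
  obtain w where g1: "- w - 1/2*(u - 3*r)^2 - a + b*w \<le> 0"
    and g2: "w - 1/2*(u - 3*r)^2 - b + a*(u - 3*r) \<le> 0" and vw: "\<bar>v - w\<bar> \<le> 2*r"
    using clamp_second_coordinate[OF a b u P r0 f1 f2] .
  have "\<bar>w\<bar> \<le> 1/9" using vw v \<open>r \<le> 1/25\<close> by (auto simp: abs_le_iff)
  then have "\<bar>w\<bar> powr (3/2) - \<bar>v\<bar> powr (3/2) \<le> 2*r"
    using abs_powr_three_halves_diff_le[of w v] vw by (simp add: abs_minus_commute)
  then have "(u - 3*r) + \<bar>w\<bar> powr (3/2) - c \<le> 0" using f3 by linarith
  moreover have "\<bar>u - (u - 3*r)\<bar> \<le> 3*r" using r0 by simp
  ultimately show thesis using that g1 g2 vw by blast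
qed

lemma vec_nth_le_infdist_negorth: "y $ i \<le> infdist y negorth"
proof -
  have "0 \<in> negorth" by (simp add: negorth_def)
  then have ne: "negorth \<noteq> {}" by blast
  show ?thesis
    unfolding infdist_notempty[OF ne]
  proof (rule cINF_greatest[OF ne])
    fix z assume "z \<in> negorth"
    then have "y $ i \<le> y $ i - z $ i" by (simp add: negorth_def)
    also have "\<dots> \<le> dist y z"
      using component_le_norm_cart[of "y - z" i] by (simp add: dist_norm)
    finally show "y $ i \<le> dist y z" .
  qed
qed

lemma robinson_estimate:
  fixes p :: "real^3" and x :: "real^2"
  assumes np: "norm p < 1/100" and nx: "norm x < 1/100" and P: "p \<in> Pset"
  shows "Gamma p \<noteq> {} \<and> infdist x (Gamma p) \<le> 5 * infdist (cF p x) negorth"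
proof -
  have cp: "\<bar>p$i\<bar> \<le> 1/100" for i using component_le_norm_cart[of p i] np by linarith
  have cx: "\<bar>x$i\<bar> \<le> 1/100" for i using component_le_norm_cart[of x i] nx by linarith
  have P': "- p$1 - p$2 + 3/2*(p$1)^2 \<le> 0" using P by (simp add: Pset_def)
  define r where "r = max 0 (max (cf 1 p x) (max (cf 2 p x) (cf 3 p x)))"
  have "cf 1 p x = - x$2 - 1/2*(x$1)^2 - p$1 + p$2 * x$2"
    and "cf 2 p x = x$2 - 1/2*(x$1)^2 - p$2 + p$1 * x$1"
    and "cf 3 p x = x$1 + \<bar>x$2\<bar> powr (3/2) - p$3" by (simp_all add: cf_def)
  note r_scalar = r_def[unfolded this]
  obtain y1 y2 where g1: "- y2 - 1/2*y1^2 - p$1 + p$2 * y2 \<le> 0"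
    and g2: "y2 - 1/2*y1^2 - p$2 + p$1*y1 \<le> 0" and g3: "y1 + \<bar>y2\<bar> powr (3/2) - p$3 \<le> 0"
    and d1: "\<bar>x$1 - y1\<bar> \<le> 3*r" and d2: "\<bar>x$2 - y2\<bar> \<le> 2*r"
    by (rule feasible_point_within_residual[OF cp[of 1] cp[of 2] cp[of 3] cx[of 1] cx[of 2] P' r_scalar])
  define y :: "real^2" where "y = (\<chi> i. if i = 1 then y1 else y2)"
  have y1: "y$1 = y1" and y2: "y$2 = y2" unfolding y_def by simp_all
  have yG: "y \<in> Gamma p" unfolding Gamma_def using g1 g2 g3 by (auto simp: cf_def y1 y2)
  have "infdist x (Gamma p) \<le> norm (x - y)" using infdist_le[OF yG] by (simp add: dist_norm)
  also have "\<dots> \<le> \<bar>x$1 - y1\<bar> + \<bar>x$2 - y2\<bar>"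
    using norm_le_l1_cart[of "x - y"] by (simp add: sum_2 y1 y2)
  also have "\<dots> \<le> 5 * r" using d1 d2 by linarith
  also have "\<dots> \<le> 5 * infdist (cF p x) negorth"
  proof -
    have "cF p x $ 1 = cf 1 p x" "cF p x $ 2 = cf 2 p x" "cF p x $ 3 = cf 3 p x"
      by (simp_all add: cF_def)
    then show ?thesis
      using vec_nth_le_infdist_negorth[of "cF p x" 1] vec_nth_le_infdist_negorth[of "cF p x" 2]
        vec_nth_le_infdist_negorth[of "cF p x" 3] infdist_nonneg[of "cF p x" negorth]
      unfolding r_def by simp
  qed
  finally show ?thesis using yG by auto
qed

lemma not_MFCQ_if_opposite_derivatives:
  fixes \<phi> :: "nat \<Rightarrow> 'a::real_inner \<Rightarrow> real"
  assumes "i \<in> I" "j \<in> I" "\<phi> i x = 0" "\<phi> j x = 0"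
    and Di: "(\<phi> i has_derivative D) (at x)" and Dj: "(\<phi> j has_derivative (\<lambda>h. - D h)) (at x)"
  shows "\<not> MFCQ I \<phi> x"
proof
  assume "MFCQ I \<phi> x"
  then obtain d gi gj where gi: "GDERIV (\<phi> i) x :> gi" "inner gi d < 0"
    and gj: "GDERIV (\<phi> j) x :> gj" "inner gj d < 0"
    using assms(1-4) unfolding MFCQ_def by metis
  have "(\<lambda>h. inner h gi) = D"
    using gi(1) Di unfolding gderiv_def by (rule has_derivative_unique)
  moreover have "(\<lambda>h. inner h gj) = (\<lambda>h. - D h)"
    using gj(1) Dj unfolding gderiv_def by (rule has_derivative_unique)
  ultimately have "inner gi d + inner gj d = 0" by (metis add.right_inverse inner_commute)
  then show False using gi(2) gj(2) by linarith
qed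

lemma has_derivative_cf1_at_0: "((\<lambda>x. cf 1 0 x) has_derivative (\<lambda>h. - h$2)) (at (0::real^2))"
  using bounded_linear_imp_has_derivative[OF bounded_linear_vec_nth]
  unfolding cf_def by (auto intro!: derivative_eq_intros)

lemma has_derivative_cf2_at_0: "((\<lambda>x. cf 2 0 x) has_derivative (\<lambda>h. h$2)) (at (0::real^2))"
  using bounded_linear_imp_has_derivative[OF bounded_linear_vec_nth]
  unfolding cf_def by (auto intro!: derivative_eq_intros)

lemma differentiable_cf3_at_0: "(\<lambda>x. cf 3 0 x) differentiable (at (0::real^2))"
proof -
  have "(\<lambda>t::real. \<bar>t\<bar> powr (3/2)) differentiable (at ((0::real^2)$2))"
    using has_real_derivative_abs_powr_three_halves_at_0
    by (auto intro: differentiableI has_field_derivative_imp_has_derivative)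
  then have "((\<lambda>t. \<bar>t\<bar> powr (3/2)) \<circ> (\<lambda>x::real^2. x$2)) differentiable (at 0)"
    by (rule differentiable_chain_at[OF bounded_linear_imp_differentiable[OF bounded_linear_vec_nth]])
  moreover have "(\<lambda>x::real^2. x$1) differentiable (at 0)"
    by (rule bounded_linear_imp_differentiable) auto
  ultimately have "(\<lambda>x::real^2. x$1 + \<bar>x$2\<bar> powr (3/2) - 0) differentiable (at 0)"
    by (auto intro!: differentiable_add differentiable_diff simp: o_def)
  then show ?thesis by (simp add: cf_def)
qed

theorem mainTheorem12:
  shows "(\<exists>\<kappa>::real. \<exists>V U. \<kappa> \<ge> 0 \<and> open V \<and> (0::real^3) \<in> V \<and> open U \<and> (0::real^2) \<in> U \<and>
           (\<forall>p\<in>V \<inter> Pset. \<forall>x\<in>U. Gamma p \<noteq> {} \<and>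
              infdist x (Gamma p) \<le> \<kappa> * infdist (cF p x) negorth))
       \<and> (0::real^3) \<in> Pset
       \<and> (\<forall>i\<in>{1,2,3}. cf i 0 (0::real^2) \<le> 0)
       \<and> (\<forall>i\<in>{1,2,3}. (\<lambda>x. cf i 0 x) differentiable (at (0::real^2)))
       \<and> \<not> MFCQ {1,2,3} (\<lambda>i x. cf i 0 x) (0::real^2)"
proof (intro conjI)
  have "\<forall>p\<in>ball 0 (1/100) \<inter> Pset. \<forall>x\<in>ball 0 (1/100). Gamma p \<noteq> {} \<and>
          infdist x (Gamma p) \<le> 5 * infdist (cF p x) negorth"
    using robinson_estimate by simp
  then show "\<exists>\<kappa>::real. \<exists>V U. \<kappa> \<ge> 0 \<and> open V \<and> (0::real^3) \<in> V \<and> open U \<and> (0::real^2) \<in> U \<and>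
           (\<forall>p\<in>V \<inter> Pset. \<forall>x\<in>U. Gamma p \<noteq> {} \<and>
              infdist x (Gamma p) \<le> \<kappa> * infdist (cF p x) negorth)"
    by (intro exI[of _ 5] exI[of _ "ball 0 (1/100)"]) auto
  show "(0::real^3) \<in> Pset" by (simp add: Pset_def)
  show "\<forall>i\<in>{1,2,3}. cf i 0 (0::real^2) \<le> 0" by (simp add: cf_def)
  show "\<forall>i\<in>{1,2,3}. (\<lambda>x. cf i 0 x) differentiable (at (0::real^2))"
    using has_derivative_cf1_at_0 has_derivative_cf2_at_0 differentiable_cf3_at_0
    by (auto intro: differentiableI)
  show "\<not> MFCQ {1,2,3} (\<lambda>i x. cf i 0 x) (0::real^2)"
    using not_MFCQ_if_opposite_derivatives[of 2 "{1,2,3}" 1 "\<lambda>i x. cf i 0 x" 0 "\<lambda>h. h$2"]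
      has_derivative_cf1_at_0 has_derivative_cf2_at_0 by (simp add: cf_def)
qed

end
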